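(* Every local orthogonal map $F:U\subseteq\mathcal G(r,s)\to\mathcal G(r',s')$ maps null points to null points.
   Context: For $r\le s$, $\mathbb C^{r,s}$ denotes $\mathbb C^{r+s}$ with the indefinite Hermitian form $\langle z,w\rangle_{r,s}=\sum_{i=1}^r z_i\bar w_i-\sum_{i=r+1}^{r+s}z_i\bar w_i$. $\mathcal G(r,s)$ denotes the Grassmannian $G(r,r+s)$; for $p\in\mathcal G(r,s)$, $V_p$ is the corresponding $r$-dimensional subspace and $A_p$ an $r\times(r+s)$ matrix whose rows span $V_p$. With $I_{r,s}=\mathrm{diag}(I_r,-I_s)$, $p\perp q$ means $A_pI_{r,s}A_q^H=0$, and $p$ is null if $A_pI_{r,s}A_p^H=0$. A holomorphic map $F:U\to\mathcal G(r',s')$, with $U\subseteq\mathcal G(r,s)$ a connected open set containing a null point, is a local orthogonal map if $F(p)\perp F(q)$ for all $p,q\in U$ with $p\perp q$. *)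

theory Defs
  imports "HOL-Analysis.Analysis"
begin

text \<open>The space C^{r,s}: vectors indexed by the disjoint sum 'r + 's; the first r
  coordinates (Inl) carry sign +1, the last s coordinates (Inr) carry sign -1.\<close>

definition indef_form :: "complex^('r::finite + 's::finite) \<Rightarrow> complex^('r + 's) \<Rightarrow> complex" where
  "indef_form z w = (\<Sum>i\<in>UNIV. z $ Inl i * cnj (w $ Inl i)) - (\<Sum>j\<in>UNIV. z $ Inr j * cnj (w $ Inr j))"

definition grass :: "(complex^('r::finite + 's::finite)) set set" where
  "grass = {V. vec.subspace V \<and> vec.dim V = CARD('r)}"

definition full_rank_mats :: "(complex^('r::finite + 's::finite)^'r) set" where
  "full_rank_mats = {A. rank A = CARD('r)}"

definition row_space :: "complex^('r::finite + 's::finite)^'r \<Rightarrow> (complex^('r + 's)) set" where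
  "row_space A = vec.span (rows A)"

text \<open>Topology of the Grassmannian: the quotient topology from the (open) set of full
  rank matrices under the map A \<mapsto> row space of A.\<close>

definition grass_open :: "(complex^('r::finite + 's::finite)) set set \<Rightarrow> bool" where
  "grass_open U \<longleftrightarrow> U \<subseteq> (grass :: (complex^('r + 's)) set set) \<and>
     open {A :: complex^('r + 's)^'r. A \<in> full_rank_mats \<and> row_space A \<in> U}"

definition grass_top :: "(complex^('r::finite + 's::finite)) set topology" where
  "grass_top = topology grass_open"

definition mscale :: "complex \<Rightarrow> complex^'n^'m \<Rightarrow> complex^'n^'m" where
  "mscale c X = (\<chi> i j. c * X $ i $ j)"

definition mat_holomorphic_on ::
  "(complex^'n^'m \<Rightarrow> complex^'k^'l) \<Rightarrow> (complex^'n^'m) set \<Rightarrow> bool" where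
  "mat_holomorphic_on f S \<longleftrightarrow> (\<forall>x\<in>S. \<exists>f'. (f has_derivative f') (at x) \<and>
      (\<forall>c X. f' (mscale c X) = mscale c (f' X)))"

definition grass_holomorphic_on ::
  "((complex^('r::finite + 's::finite)) set \<Rightarrow> (complex^('r2::finite + 's2::finite)) set)
     \<Rightarrow> (complex^('r + 's)) set set \<Rightarrow> bool" where
  "grass_holomorphic_on F U \<longleftrightarrow>
     (\<forall>A :: complex^('r + 's)^'r. A \<in> full_rank_mats \<and> row_space A \<in> U \<longrightarrow>
        (\<exists>N (\<Phi> :: complex^('r + 's)^'r \<Rightarrow> complex^('r2 + 's2)^'r2).
           open N \<and> A \<in> N \<and> N \<subseteq> {B. B \<in> full_rank_mats \<and> row_space B \<in> U} \<and>
           mat_holomorphic_on \<Phi> N \<and>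
           (\<forall>B\<in>N. \<Phi> B \<in> full_rank_mats \<and> row_space (\<Phi> B) = F (row_space B))))"

text \<open>Orthogonality and null points (A_p I_{r,s} A_q^H = 0 means the indefinite form
  vanishes on V_p x V_q).\<close>

definition grass_perp :: "(complex^('r::finite + 's::finite)) set \<Rightarrow> (complex^('r + 's)) set \<Rightarrow> bool" where
  "grass_perp V W \<longleftrightarrow> (\<forall>v\<in>V. \<forall>w\<in>W. indef_form v w = 0)"

definition grass_null :: "(complex^('r::finite + 's::finite)) set \<Rightarrow> bool" where
  "grass_null V \<longleftrightarrow> grass_perp V V"

definition local_orthogonal_map ::
  "(complex^('r::finite + 's::finite)) set set \<Rightarrow>
   ((complex^('r + 's)) set \<Rightarrow> (complex^('r2::finite + 's2::finite)) set) \<Rightarrow> bool" where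
  "local_orthogonal_map U F \<longleftrightarrow>
     openin grass_top U \<and> connectedin grass_top U \<and> (\<exists>p\<in>U. grass_null p) \<and>
     F ` U \<subseteq> grass \<and> grass_holomorphic_on F U \<and>
     (\<forall>p\<in>U. \<forall>q\<in>U. grass_perp p q \<longrightarrow> grass_perp (F p) (F q))"

end

theory Submission
  imports Defs
begin

lemma local_orthogonal_map_perp:
  assumes "local_orthogonal_map U F" and "p \<in> U" and "q \<in> U" and "grass_perp p q"
  shows "grass_perp (F p) (F q)"
  using assms unfolding local_orthogonal_map_def by blast

theorem proposition2p4:
  fixes U :: "(complex^('r::finite + 's::finite)) set set"
    and F :: "(complex^('r + 's)) set \<Rightarrow> (complex^('r2::finite + 's2::finite)) set"
  assumes "CARD('r) \<le> CARD('s)" and "CARD('r2) \<le> CARD('s2)"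
    and "local_orthogonal_map U F"
    and "p \<in> U" and "grass_null p"
  shows "grass_null (F p)"
proof -
  have "grass_perp p p"
    using \<open>grass_null p\<close> unfolding grass_null_def .
  then have "grass_perp (F p) (F p)"
    by (rule local_orthogonal_map_perp[OF \<open>local_orthogonal_map U F\<close> \<open>p \<in> U\<close> \<open>p \<in> U\<close>])
  then show ?thesis
    unfolding grass_null_def .
qed

end
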